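(* Let $d$ be a positive integer and let $\{\mathcal{F}^{(n)}\}_{n\in\mathbb{N}}$ be a sequence of degree-$d$ factors, all with the same dimension vector $(M_1,\dots,M_d)$. Then there exists a fully regular sequence $\{\mathcal{H}^{(n)}\}_{n\in\mathbb{N}}$ of degree-$d$ factors that is a refinement of $\{\mathcal{F}^{(n)}\}$.
   Context: A degree-$d$ factor is a tuple $(P_1,\dots,P_K)$ of polynomials $\mathbb{F}_2^{m}\to\mathbb{F}_2$ (for some $m$, which may depend on $n$ in a sequence) of degree at most $d$; its dimension vector is $(M_1,\dots,M_d)$ where $M_\ell$ is the number of $P_i$ of degree exactly $\ell$, and $K=\sum_\ell M_\ell$. For $P$ not identically zero and $\ell\ge1$, $\operatorname{rank}_{\ell}(P)$ is the smallest positive integer $k$ with $P=\Gamma(Q_1,\dots,Q_k)$ for polynomials $Q_j$ of degree at most $\ell$ and some $\Gamma\colon\mathbb{F}_2^k\to\mathbb{F}_2$. A factor is $r$-regular if every nonzero linear combination $\sum_i\lambda_iP_i$ has $\operatorname{rank}_{\ell-1}>r$, where $\ell=\max_i\deg(\lambda_iP_i)$. A sequence of factors $\{\mathcal{F}^{(n)}\}$ is $r$-regular if there is $N_0$ such that $\mathcal{F}^{(n)}$ is $r$-regular for all $n\ge N_0$, and fully regular if it is $r$-regular for every $r\in\mathbb{N}$. In a sequence of factors, all factors have the same degree bound and the same dimension vector. A sequence $\{\mathcal{G}^{(n)}\}$ (of dimension $L$) refines $\{\mathcal{F}^{(n)}\}$ (of dimension $K$) if there are a strictly increasing $g\colon\mathbb{N}\to\mathbb{N}$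 and a single $\Gamma\colon\mathbb{F}_2^L\to\mathbb{F}_2^K$ such that $\Gamma(\mathcal{G}^{(n)})=\mathcal{F}^{(g(n))}$ as functions for all $n$. *)

theory Defs
  imports Main
begin

text \<open>Points of F_2^m are represented by their supports: subsets x of {..<m}.
  A function F_2^m \<rightarrow> F_2 is a map P :: nat set \<Rightarrow> bool, of which only
  the values on subsets of {..<m} matter (True = 1, False = 0).\<close>

definition monomial_sum :: "nat set set \<Rightarrow> nat set \<Rightarrow> bool" where
  "monomial_sum C x = odd (card {S \<in> C. S \<subseteq> x})"

definition deg_le :: "nat \<Rightarrow> (nat set \<Rightarrow> bool) \<Rightarrow> nat \<Rightarrow> bool" where
  "deg_le m P d \<longleftrightarrow> (\<exists>C. C \<subseteq> Pow {..<m} \<and> (\<forall>S\<in>C. card S \<le> d) \<and>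
       (\<forall>x. x \<subseteq> {..<m} \<longrightarrow> P x = monomial_sum C x))"

definition poly_deg :: "nat \<Rightarrow> (nat set \<Rightarrow> bool) \<Rightarrow> nat" where
  "poly_deg m P = (LEAST d. deg_le m P d)"

text \<open>rank_l(P) \<le> r: P = Gamma(Q_1,...,Q_k) for some 1 \<le> k \<le> r, deg Q_j \<le> l.
  (If no such representation exists for any k, the rank is infinite.)\<close>
definition rank_le :: "nat \<Rightarrow> nat \<Rightarrow> (nat set \<Rightarrow> bool) \<Rightarrow> nat \<Rightarrow> bool" where
  "rank_le m l P r \<longleftrightarrow> (\<exists>k Q \<Gamma>. 1 \<le> k \<and> k \<le> r \<and>
       (\<forall>j<k. deg_le m (Q j) l) \<and>
       (\<forall>x. x \<subseteq> {..<m} \<longrightarrow> P x = \<Gamma> (\<lambda>j. if j < k then Q j x else False)))"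

definition lin_comb :: "nat set \<Rightarrow> (nat \<Rightarrow> nat set \<Rightarrow> bool) \<Rightarrow> nat set \<Rightarrow> bool" where
  "lin_comb Lam P x = odd (card {i \<in> Lam. P i x})"

definition is_factor :: "nat \<Rightarrow> nat \<Rightarrow> (nat \<Rightarrow> nat) \<Rightarrow> nat \<Rightarrow> (nat \<Rightarrow> nat set \<Rightarrow> bool) \<Rightarrow> bool" where
  "is_factor d K M m P \<longleftrightarrow>
     (\<forall>i<K. deg_le m (P i) d) \<and>
     (\<forall>l\<in>{1..d}. card {i. i < K \<and> deg_le m (P i) l \<and> \<not> deg_le m (P i) (l - 1)} = M l) \<and>
     K = (\<Sum>l=1..d. M l)"

definition factor_regular :: "nat \<Rightarrow> nat \<Rightarrow> nat \<Rightarrow> (nat \<Rightarrow> nat set \<Rightarrow> bool) \<Rightarrow> bool" where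
  "factor_regular r K m P \<longleftrightarrow>
     (\<forall>Lam. Lam \<subseteq> {..<K} \<longrightarrow> Lam \<noteq> {} \<longrightarrow>
        \<not> rank_le m (Max ((\<lambda>i. poly_deg m (P i)) ` Lam) - 1) (lin_comb Lam P) r)"

definition seq_regular :: "nat \<Rightarrow> nat \<Rightarrow> (nat \<Rightarrow> nat) \<Rightarrow> (nat \<Rightarrow> nat \<Rightarrow> nat set \<Rightarrow> bool) \<Rightarrow> bool" where
  "seq_regular r K m F \<longleftrightarrow> (\<exists>N0. \<forall>n\<ge>N0. factor_regular r K (m n) (F n))"

definition fully_regular :: "nat \<Rightarrow> (nat \<Rightarrow> nat) \<Rightarrow> (nat \<Rightarrow> nat \<Rightarrow> nat set \<Rightarrow> bool) \<Rightarrow> bool" where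
  "fully_regular K m F \<longleftrightarrow> (\<forall>r. seq_regular r K m F)"

definition refines :: "nat \<Rightarrow> (nat \<Rightarrow> nat) \<Rightarrow> (nat \<Rightarrow> nat \<Rightarrow> nat set \<Rightarrow> bool) \<Rightarrow>
                       nat \<Rightarrow> (nat \<Rightarrow> nat) \<Rightarrow> (nat \<Rightarrow> nat \<Rightarrow> nat set \<Rightarrow> bool) \<Rightarrow> bool" where
  "refines L mG G K mF F \<longleftrightarrow> (\<exists>g \<Gamma>. strict_mono (g :: nat \<Rightarrow> nat) \<and>
     (\<forall>n. mG n = mF (g n) \<and>
        (\<forall>x. x \<subseteq> {..<mG n} \<longrightarrow> (\<forall>i<K.
            F (g n) i x = \<Gamma> (\<lambda>j. if j < L then G n j x else False) i))))"

end

(* Induction on the multiset of degrees of the factors, ordered by the multiset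
   extension of <.  If the sequence is not fully regular, then for some r infinitely
   many of its factors have a linear combination over a set Lam of members that is a
   function of at most r polynomials Q_j of degree below the top degree of Lam, say
   that of the member i0.  The data Lam, i0, the truth table and all degrees range
   over a finite set, so they are constant along a subsequence.  Replacing the member
   i0 by the nonconstant Q_j refines that subsequence (P_i0 is the parity of the other
   members of Lam and the table value), and the degree multiset decreases: one degree
   is traded for finitely many smaller ones. *)

theory Submission
  imports Defs "HOL-Library.Multiset_Order" "HOL-Library.Infinite_Set"
begin

lemma deg_le_mono: "deg_le m P d \<Longrightarrow> d \<le> d' \<Longrightarrow> deg_le m P d'"
  unfolding deg_le_def by (meson order_trans)

lemma poly_deg_le: "deg_le m P d \<Longrightarrow> poly_deg m P \<le> d"
  unfolding poly_deg_def by (rule Least_le)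

lemma deg_le_poly_deg: "deg_le m P d \<Longrightarrow> deg_le m P (poly_deg m P)"
  unfolding poly_deg_def by (rule LeastI)

lemma deg_le_iff_poly_deg_le: "deg_le m P d \<Longrightarrow> deg_le m P e \<longleftrightarrow> poly_deg m P \<le> e"
  using deg_le_mono deg_le_poly_deg poly_deg_le by blast

lemma deg_le_0_imp_constant:
  assumes "deg_le m P 0" "x \<subseteq> {..<m}"
  shows "P x = P {}"
proof -
  obtain C where C: "C \<subseteq> Pow {..<m}" "\<forall>S\<in>C. card S = 0"
    "\<forall>x. x \<subseteq> {..<m} \<longrightarrow> P x = monomial_sum C x"
    using assms(1) unfolding deg_le_def by auto
  have "S = {}" if "S \<in> C" for S
  proof -
    have "finite S" using that C(1) finite_subset[of S "{..<m}"] by auto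
    then show ?thesis using that C(2) by auto
  qed
  then have "C \<subseteq> {{}}" by blast
  then have "{S \<in> C. S \<subseteq> x} = {S \<in> C. S \<subseteq> {}}" by auto
  then show ?thesis using C(3) assms(2) unfolding monomial_sum_def by simp
qed

definition degree_mset :: "nat \<Rightarrow> nat \<Rightarrow> (nat \<Rightarrow> nat set \<Rightarrow> bool) \<Rightarrow> nat multiset" where
  "degree_mset m K P = image_mset (\<lambda>i. poly_deg m (P i)) (mset_set {..<K})"

definition dim_mset :: "nat \<Rightarrow> (nat \<Rightarrow> nat) \<Rightarrow> nat multiset" where
  "dim_mset d M = (\<Sum>l\<in>{1..d}. replicate_mset (M l) l)"

lemma count_dim_mset: "count (dim_mset d M) l = (if l \<in> {1..d} then M l else 0)"
  unfolding dim_mset_def by (simp add: count_sum if_distrib sum.delta cong: if_cong)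

lemma size_dim_mset: "size (dim_mset d M) = (\<Sum>l=1..d. M l)"
  unfolding dim_mset_def by simp

lemma dim_mset_count:
  assumes "set_mset D \<subseteq> {1..d}"
  shows "dim_mset d (count D) = D"
  by (rule multiset_eqI) (use assms in \<open>auto simp: count_dim_mset not_in_iff\<close>)

lemma count_degree_mset: "count (degree_mset m K P) l = card {i. i < K \<and> poly_deg m (P i) = l}"
  unfolding degree_mset_def by (simp add: count_image_mset Int_def conj_commute)

lemma eq_dim_mset_iff:
  fixes D :: "nat multiset"
  assumes "set_mset D \<subseteq> {..d}"
  shows "D = dim_mset d M \<longleftrightarrow> (\<forall>l\<in>{1..d}. count D l = M l) \<and> size D = (\<Sum>l=1..d. M l)"
proof
  assume "(\<forall>l\<in>{1..d}. count D l = M l) \<and> size D = (\<Sum>l=1..d. M l)"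
  then have counts: "\<forall>l\<in>{1..d}. count D l = M l" and size: "size D = (\<Sum>l=1..d. M l)"
    by auto
  have "size D = (\<Sum>l\<in>{..d}. count D l)"
    using assms by (simp add: size_multiset_overloaded_eq sum.mono_neutral_left not_in_iff)
  also have "\<dots> = count D 0 + (\<Sum>l=1..d. M l)"
    using counts by (simp add: atMost_atLeast0 sum.atLeast_Suc_atMost)
  finally have "count D 0 = 0" using size by linarith
  show "D = dim_mset d M"
  proof (rule multiset_eqI)
    fix l
    show "count D l = count (dim_mset d M) l"
      using counts assms \<open>count D 0 = 0\<close>
      by (cases "l = 0") (auto simp: count_dim_mset count_eq_zero_iff)
  qed
qed (simp add: count_dim_mset size_dim_mset)

lemma is_factor_iff_degree_mset:
  "is_factor d K M m P \<longleftrightarrow> (\<forall>i<K. deg_le m (P i) d) \<and> degree_mset m K P = dim_mset d M"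
proof (cases "\<forall>i<K. deg_le m (P i) d")
  case True
  have "{i. i < K \<and> deg_le m (P i) l \<and> \<not> deg_le m (P i) (l - 1)} = {i. i < K \<and> poly_deg m (P i) = l}"
    if "1 \<le> l" for l
    using True that deg_le_iff_poly_deg_le by fastforce
  moreover have "size (degree_mset m K P) = K" by (simp add: degree_mset_def)
  ultimately have "is_factor d K M m P \<longleftrightarrow>
      (\<forall>l\<in>{1..d}. count (degree_mset m K P) l = M l) \<and> size (degree_mset m K P) = (\<Sum>l=1..d. M l)"
    using True by (simp add: is_factor_def count_degree_mset)
  also have "\<dots> \<longleftrightarrow> degree_mset m K P = dim_mset d M"
    using True poly_deg_le by (intro eq_dim_mset_iff[symmetric]) (auto simp: degree_mset_def)
  finally show ?thesis using True by simp
qed (auto simp: is_factor_def)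

lemma refines_refl: "refines K m F K m F"
  unfolding refines_def by (intro exI[of _ id] exI[of _ "\<lambda>v. v"]) (simp add: strict_mono_def)

lemma refines_trans:
  assumes "refines L mH H L' mG G" "refines L' mG G K mF F"
  shows "refines L mH H K mF F"
proof -
  obtain g1 \<Gamma>1 where g1: "strict_mono g1" and FG: "\<forall>n. mG n = mF (g1 n) \<and>
      (\<forall>x. x \<subseteq> {..<mG n} \<longrightarrow>
        (\<forall>i<K. F (g1 n) i x = \<Gamma>1 (\<lambda>j. if j < L' then G n j x else False) i))"
    using assms(2) unfolding refines_def by blast
  obtain g2 \<Gamma>2 where g2: "strict_mono g2" and GH: "\<forall>n. mH n = mG (g2 n) \<and>
      (\<forall>x. x \<subseteq> {..<mH n} \<longrightarrow>
        (\<forall>j<L'. G (g2 n) j x = \<Gamma>2 (\<lambda>j. if j < L then H n j x else False) j))"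
    using assms(1) unfolding refines_def by blast
  have mG: "mG n = mF (g1 n)" and mH: "mH n = mG (g2 n)" for n
    using FG GH by auto
  have F: "F (g1 n) i x = \<Gamma>1 (\<lambda>j. if j < L' then G n j x else False) i"
    if "x \<subseteq> {..<mG n}" "i < K" for n x i
    using FG that by blast
  have G: "G (g2 n) j x = \<Gamma>2 (\<lambda>j. if j < L then H n j x else False) j"
    if "x \<subseteq> {..<mH n}" "j < L'" for n x j
    using GH that by blast
  let ?\<Gamma> = "\<lambda>v. \<Gamma>1 (\<lambda>j. if j < L' then \<Gamma>2 v j else False)"
  have "F (g1 (g2 n)) i x = ?\<Gamma> (\<lambda>j. if j < L then H n j x else False) i"
    if "x \<subseteq> {..<mH n}" "i < K" for n x i
  proof -
    have "(\<lambda>j. if j < L' then G (g2 n) j x else False) =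
          (\<lambda>j. if j < L' then \<Gamma>2 (\<lambda>j. if j < L then H n j x else False) j else False)"
      using G[OF that(1)] by auto
    then show ?thesis using F[of x "g2 n" i] that by (simp add: mH)
  qed
  moreover have "strict_mono (g1 \<circ> g2)"
    using g1 g2 by (simp add: strict_mono_def)
  ultimately show ?thesis
    unfolding refines_def using mG mH by (intro exI[of _ "g1 \<circ> g2"] exI[of _ ?\<Gamma>]) simp
qed

lemma infinitely_often_imp_constant_subseq:
  assumes "infinite {n::nat. \<exists>c\<in>C. P n c}" "finite C"
  obtains c and g :: "nat \<Rightarrow> nat" where "c \<in> C" "strict_mono g" "\<And>n. P (g n) c"
proof -
  have "{n. \<exists>c\<in>C. P n c} = (\<Union>c\<in>C. {n. P n c})" by auto
  then obtain c where c: "c \<in> C" "infinite {n. P n c}" using assms by auto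
  have "P (enumerate {n. P n c} n) c" for n
    using enumerate_in_set[OF c(2)] by simp
  then show ?thesis using that[OF c(1) strict_mono_enumerate[OF c(2)]] by blast
qed

definition low_degree_expression ::
    "nat \<Rightarrow> nat \<Rightarrow> (nat \<Rightarrow> nat set \<Rightarrow> bool) \<Rightarrow> nat set \<Rightarrow> nat \<Rightarrow> bool list set \<Rightarrow>
     (nat set \<Rightarrow> bool) list \<Rightarrow> bool" where
  "low_degree_expression m K P Lam i0 tab Qs \<longleftrightarrow> Lam \<subseteq> {..<K} \<and> i0 \<in> Lam \<and>
     (\<forall>q\<in>set Qs. deg_le m q (poly_deg m (P i0) - 1) \<and> 0 < poly_deg m q) \<and>
     (\<forall>x\<subseteq>{..<m}. lin_comb Lam P x \<longleftrightarrow> map (\<lambda>q. q x) Qs \<in> tab)"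

fun fill_constants :: "nat \<Rightarrow> (nat set \<Rightarrow> bool) list \<Rightarrow> bool list \<Rightarrow> bool list" where
  "fill_constants m [] bs = []"
| "fill_constants m (q # Qs) bs =
     (if 0 < poly_deg m q then hd bs # fill_constants m Qs (tl bs)
      else q {} # fill_constants m Qs bs)"

lemma fill_constants_values:
  assumes "x \<subseteq> {..<m}" "\<forall>q\<in>set Qs. \<exists>e. deg_le m q e"
  shows "fill_constants m Qs (map (\<lambda>q. q x) (filter (\<lambda>q. 0 < poly_deg m q) Qs)) = map (\<lambda>q. q x) Qs"
  using assms(2)
proof (induction Qs)
  case (Cons q Qs)
  have "q x = q {}" if "poly_deg m q = 0"
  proof -
    obtain e where "deg_le m q e" using Cons.prems by auto
    then have "deg_le m q 0" using deg_le_poly_deg that by fastforce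
    then show ?thesis using deg_le_0_imp_constant assms(1) by blast
  qed
  then show ?case using Cons by auto
qed simp

lemma factor_poly_deg_bounds:
  assumes "is_factor d K M m P" "i < K"
  shows "1 \<le> poly_deg m (P i) \<and> poly_deg m (P i) \<le> d"
proof -
  have "poly_deg m (P i) \<in># degree_mset m K P"
    using assms(2) by (simp add: degree_mset_def)
  then have "poly_deg m (P i) \<in># dim_mset d M"
    using assms(1) by (simp add: is_factor_iff_degree_mset)
  then show ?thesis by (auto simp: count_dim_mset simp flip: count_greater_zero_iff split: if_splits)
qed

lemma low_degree_expression_lower_degree:
  assumes "is_factor d K M m P" "low_degree_expression m K P Lam i0 tab Qs" "q \<in> set Qs"
  shows "deg_le m q d" "1 \<le> poly_deg m q" "poly_deg m q < poly_deg m (P i0)"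
proof -
  have q: "deg_le m q (poly_deg m (P i0) - 1)" "0 < poly_deg m q"
    using assms(2,3) by (auto simp: low_degree_expression_def)
  have "1 \<le> poly_deg m (P i0) \<and> poly_deg m (P i0) \<le> d"
    using assms(2) factor_poly_deg_bounds[OF assms(1)] by (auto simp: low_degree_expression_def)
  then show "deg_le m q d" "1 \<le> poly_deg m q" "poly_deg m q < poly_deg m (P i0)"
    using q deg_le_mono[OF q(1)] poly_deg_le[OF q(1)] by auto
qed

lemma irregular_factor_imp_low_degree_expression:
  assumes fac: "is_factor d K M m P" and irreg: "\<not> factor_regular r K m P"
  obtains Lam i0 tab Qs where "low_degree_expression m K P Lam i0 tab Qs"
    "length Qs \<le> r" "tab \<subseteq> {bs. length bs \<le> r}"
proof -
  obtain Lam where Lam: "Lam \<subseteq> {..<K}" "Lam \<noteq> {}"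
    and rank: "rank_le m (Max ((\<lambda>i. poly_deg m (P i)) ` Lam) - 1) (lin_comb Lam P) r"
    using irreg unfolding factor_regular_def by blast
  have "finite Lam" using Lam(1) finite_subset by blast
  then obtain i0 where i0: "i0 \<in> Lam" "poly_deg m (P i0) = Max ((\<lambda>i. poly_deg m (P i)) ` Lam)"
    using Max_in[of "(\<lambda>i. poly_deg m (P i)) ` Lam"] Lam(2) by fastforce
  obtain k Q \<Gamma> where "k \<le> r" and Q: "\<forall>j<k. deg_le m (Q j) (poly_deg m (P i0) - 1)"
    and \<Gamma>: "\<forall>x. x \<subseteq> {..<m} \<longrightarrow> lin_comb Lam P x = \<Gamma> (\<lambda>j. if j < k then Q j x else False)"
    using rank unfolding rank_le_def i0(2) by blast
  define Qs0 where "Qs0 = map Q [0..<k]"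
  \<comment> \<open>Members of a factor have positive degree, so the constant Q j are dropped and
    their values are put back into the table by fill_constants.\<close>
  define Qs where "Qs = filter (\<lambda>q. 0 < poly_deg m q) Qs0"
  define tab where "tab = {bs. length bs \<le> r \<and>
    \<Gamma> (\<lambda>j. if j < k then fill_constants m Qs0 bs ! j else False)}"
  have "length Qs \<le> r"
    using \<open>k \<le> r\<close> length_filter_le[of _ Qs0] unfolding Qs_def Qs0_def
    by (metis length_map length_upt minus_nat.diff_0 order_trans)
  moreover have "lin_comb Lam P x \<longleftrightarrow> map (\<lambda>q. q x) Qs \<in> tab" if x: "x \<subseteq> {..<m}" for x
  proof -
    have "fill_constants m Qs0 (map (\<lambda>q. q x) Qs) = map (\<lambda>j. Q j x) [0..<k]"
      unfolding Qs_def using fill_constants_values[OF x, of Qs0] Q by (force simp: Qs0_def comp_def)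
    then show ?thesis using \<Gamma> x \<open>length Qs \<le> r\<close> by (simp add: tab_def cong: if_cong)
  qed
  moreover have "\<forall>q\<in>set Qs. deg_le m q (poly_deg m (P i0) - 1) \<and> 0 < poly_deg m q"
    using Q by (auto simp: Qs_def Qs0_def)
  ultimately show ?thesis
    using that[of Lam i0 tab Qs] Lam(1) i0(1) by (auto simp: low_degree_expression_def tab_def)
qed

lemma irregular_sequence_uniform_subsequence:
  assumes fac: "\<forall>n. is_factor d K M (mF n) (F n)"
    and inf: "infinite {n. \<not> factor_regular r K (mF n) (F n)}"
  obtains g :: "nat \<Rightarrow> nat" and Lam i0 tab Qs l qdegs where "strict_mono g"
    "\<And>n. low_degree_expression (mF (g n)) K (F (g n)) Lam i0 tab (Qs n)"
    "\<And>n. poly_deg (mF (g n)) (F (g n) i0) = l"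
    "\<And>n. map (poly_deg (mF (g n))) (Qs n) = qdegs"
proof -
  define shapes :: "(nat set \<times> nat \<times> bool list set \<times> nat \<times> nat list) set" where
    "shapes = Pow {..<K} \<times> {..<K} \<times> Pow {bs. length bs \<le> r} \<times> {..d} \<times>
      {ds. set ds \<subseteq> {..d} \<and> length ds \<le> r}"
  define fits where "fits n = (\<lambda>(Lam, i0, tab, l, qdegs). \<exists>Qs.
    low_degree_expression (mF n) K (F n) Lam i0 tab Qs \<and>
    poly_deg (mF n) (F n i0) = l \<and> map (poly_deg (mF n)) Qs = qdegs)" for n
  have "finite {bs :: bool list. length bs \<le> r}"
    using finite_lists_length_le[of "UNIV :: bool set" r] by simp
  then have "finite shapes"
    unfolding shapes_def by (intro finite_cartesian_product finite_lists_length_le) auto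
  have "{n. \<not> factor_regular r K (mF n) (F n)} \<subseteq> {n. \<exists>s\<in>shapes. fits n s}"
  proof (intro subsetI, unfold mem_Collect_eq)
    fix n assume irreg: "\<not> factor_regular r K (mF n) (F n)"
    obtain Lam i0 tab Qs where E: "low_degree_expression (mF n) K (F n) Lam i0 tab Qs"
      and "length Qs \<le> r" "tab \<subseteq> {bs. length bs \<le> r}"
      using irregular_factor_imp_low_degree_expression[OF fac[rule_format] irreg] by blast
    let ?l = "poly_deg (mF n) (F n i0)"
    have "i0 < K" using E by (auto simp: low_degree_expression_def)
    then have "?l \<le> d" using factor_poly_deg_bounds fac by blast
    moreover have "poly_deg (mF n) q \<le> d" if "q \<in> set Qs" for q
      using low_degree_expression_lower_degree(3)[OF fac[rule_format] E that] \<open>?l \<le> d\<close> by simp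
    ultimately have "(Lam, i0, tab, ?l, map (poly_deg (mF n)) Qs) \<in> shapes"
      using E \<open>i0 < K\<close> \<open>length Qs \<le> r\<close> \<open>tab \<subseteq> _\<close>
      by (auto simp: shapes_def low_degree_expression_def)
    moreover have "fits n (Lam, i0, tab, ?l, map (poly_deg (mF n)) Qs)"
      using E by (auto simp: fits_def)
    ultimately show "\<exists>s\<in>shapes. fits n s" by blast
  qed
  then have infinite_fits: "infinite {n. \<exists>s\<in>shapes. fits n s}"
    using inf by (rule infinite_super)
  obtain s and g :: "nat \<Rightarrow> nat" where "s \<in> shapes" "strict_mono g"
    and fits: "\<And>n. fits (g n) s"
    using infinitely_often_imp_constant_subseq[OF infinite_fits \<open>finite shapes\<close>] by blast
  obtain Lam i0 tab l qdegs where s: "s = (Lam, i0, tab, l, qdegs)"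
    by (cases s) blast
  have "\<forall>n. \<exists>Qs. low_degree_expression (mF (g n)) K (F (g n)) Lam i0 tab Qs \<and>
      poly_deg (mF (g n)) (F (g n) i0) = l \<and> map (poly_deg (mF (g n))) Qs = qdegs"
    using fits unfolding s fits_def by simp
  from choice[OF this] obtain Qs where Qs: "\<forall>n. low_degree_expression (mF (g n)) K (F (g n)) Lam i0 tab (Qs n) \<and>
      poly_deg (mF (g n)) (F (g n) i0) = l \<and> map (poly_deg (mF (g n))) (Qs n) = qdegs"
    by blast
  show ?thesis
    using Qs \<open>strict_mono g\<close> by (intro that[of g Lam i0 tab Qs]) auto
qed

definition replace_member :: "nat \<Rightarrow> nat \<Rightarrow> (nat \<Rightarrow> 'a) \<Rightarrow> 'a list \<Rightarrow> nat \<Rightarrow> 'a" where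
  "replace_member K i0 P Qs j =
     (if j < K - 1 then P (if j = i0 then K - 1 else j) else Qs ! (j - (K - 1)))"

lemma degree_mset_replace_member:
  assumes "i0 < K"
  shows "degree_mset m (K - 1 + length Qs) (replace_member K i0 P Qs) =
    degree_mset m K P - {#poly_deg m (P i0)#} + mset (map (poly_deg m) Qs)"
proof -
  let ?deg = "\<lambda>i. poly_deg m (P i)"
  let ?degR = "\<lambda>j. poly_deg m (replace_member K i0 P Qs j)"
  let ?slot = "\<lambda>j. if j = i0 then K - 1 else j"
  have "mset_set {..<K - 1 + length Qs} = mset_set ({..<K - 1} \<union> {K - 1..<K - 1 + length Qs})"
    by (rule arg_cong[where f = mset_set]) auto
  also have "\<dots> = mset_set {..<K - 1} + mset_set {K - 1..<K - 1 + length Qs}"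
    by (rule mset_set_Union) auto
  finally have "mset_set {..<K - 1 + length Qs} =
      mset_set {..<K - 1} + mset_set {K - 1..<K - 1 + length Qs}" .
  then have "degree_mset m (K - 1 + length Qs) (replace_member K i0 P Qs) =
      image_mset ?degR (mset_set {..<K - 1}) + image_mset ?degR (mset_set {K - 1..<K - 1 + length Qs})"
    unfolding degree_mset_def by simp
  moreover have "image_mset ?degR (mset_set {..<K - 1}) = degree_mset m K P - {#?deg i0#}"
  proof -
    have "inj_on ?slot {..<K - 1}" and "?slot ` {..<K - 1} = {..<K} - {i0}"
      using assms by (auto simp: inj_on_def image_iff)
    then have "image_mset ?slot (mset_set {..<K - 1}) = mset_set {..<K} - {#i0#}"
      using assms by (simp add: image_mset_mset_set mset_set_Diff)
    moreover have "image_mset ?degR (mset_set {..<K - 1}) =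
        image_mset ?deg (image_mset ?slot (mset_set {..<K - 1}))"
      by (auto simp: multiset.map_comp replace_member_def intro!: image_mset_cong)
    ultimately show ?thesis
      using assms by (simp add: degree_mset_def image_mset_Diff)
  qed
  moreover have "image_mset ?degR (mset_set {K - 1..<K - 1 + length Qs}) = mset (map (poly_deg m) Qs)"
  proof -
    have "map ?degR [K - 1..<K - 1 + length Qs] = map (poly_deg m) Qs"
      by (rule nth_equalityI) (auto simp: replace_member_def)
    then show ?thesis by (metis mset_map mset_upt)
  qed
  ultimately show ?thesis by simp
qed

lemma less_multiset_diff_add_smaller:
  fixes A B :: "'a::preorder multiset"
  assumes "a \<in># A" "\<forall>b\<in>#B. b < a"
  shows "A - {#a#} + B < A"
proof -
  have "multp (<) (A - {#a#} + B) (A - {#a#} + {#a#})"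
    using assms(2) by (intro one_step_implies_multp) auto
  then show ?thesis using assms(1) by (simp add: less_multiset_def)
qed

lemma replace_member_is_factor:
  assumes fac: "is_factor d K M m P" and E: "low_degree_expression m K P Lam i0 tab Qs"
  defines "D \<equiv> dim_mset d M - {#poly_deg m (P i0)#} + mset (map (poly_deg m) Qs)"
  shows "is_factor d (K - 1 + length Qs) (count D) m (replace_member K i0 P Qs)"
    and "dim_mset d (count D) < dim_mset d M"
proof -
  have i0: "i0 < K" using E by (auto simp: low_degree_expression_def)
  have Qs: "deg_le m q d" "1 \<le> poly_deg m q" "poly_deg m q < poly_deg m (P i0)" if "q \<in> set Qs" for q
    using low_degree_expression_lower_degree[OF fac E that] by auto
  have "poly_deg m (P i0) \<le> d" using factor_poly_deg_bounds[OF fac i0] by simp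
  then have "set_mset D \<subseteq> {1..d}"
    using Qs unfolding D_def by (fastforce simp: count_dim_mset dest: in_diffD
      simp flip: count_greater_zero_iff split: if_splits)
  then have dim_D: "dim_mset d (count D) = D" by (rule dim_mset_count)
  have "deg_le m (replace_member K i0 P Qs j) d" if "j < K - 1 + length Qs" for j
    using that fac Qs i0 by (auto simp: replace_member_def is_factor_def)
  moreover have "degree_mset m (K - 1 + length Qs) (replace_member K i0 P Qs) = D"
    using degree_mset_replace_member[OF i0] fac
    by (simp add: D_def is_factor_iff_degree_mset)
  ultimately show "is_factor d (K - 1 + length Qs) (count D) m (replace_member K i0 P Qs)"
    by (simp add: is_factor_iff_degree_mset dim_D)
  have "poly_deg m (P i0) \<in># degree_mset m K P"
    using i0 by (simp add: degree_mset_def)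
  then have "poly_deg m (P i0) \<in># dim_mset d M"
    using fac by (simp add: is_factor_iff_degree_mset)
  then have "D < dim_mset d M"
    unfolding D_def by (rule less_multiset_diff_add_smaller) (use Qs in auto)
  then show "dim_mset d (count D) < dim_mset d M"
    by (simp only: dim_D)
qed

lemma odd_card_Collect_remove:
  assumes "finite A" "a \<in> A"
  shows "odd (card {i\<in>A. P i}) \<longleftrightarrow> odd (card {i\<in>A - {a}. P i}) \<noteq> P a"
proof (cases "P a")
  case True
  then have "{i\<in>A. P i} = insert a {i\<in>A - {a}. P i}" using assms(2) by auto
  then show ?thesis using True assms(1) by simp
next
  case False
  then have "{i\<in>A. P i} = {i\<in>A - {a}. P i}" by auto
  then show ?thesis using False by simp
qed

definition recover_members ::
    "nat \<Rightarrow> nat set \<Rightarrow> nat \<Rightarrow> bool list set \<Rightarrow> nat \<Rightarrow> (nat \<Rightarrow> bool) \<Rightarrow> nat \<Rightarrow> bool" where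
  "recover_members K Lam i0 tab k v i =
     (let w = (\<lambda>i. v (if i = K - 1 then i0 else i))
      in if i = i0 then odd (card {i'\<in>Lam - {i0}. w i'}) \<noteq> (map (\<lambda>j. v (K - 1 + j)) [0..<k] \<in> tab)
         else w i)"

lemma recover_members_replace_member:
  assumes E: "low_degree_expression m K P Lam i0 tab Qs" and x: "x \<subseteq> {..<m}" and "i < K"
  shows "P i x = recover_members K Lam i0 tab (length Qs)
    (\<lambda>j. if j < K - 1 + length Qs then replace_member K i0 P Qs j x else False) i"
proof -
  define v where "v = (\<lambda>j. if j < K - 1 + length Qs then replace_member K i0 P Qs j x else False)"
  have Lam: "Lam \<subseteq> {..<K}" "i0 \<in> Lam"
    and lin: "lin_comb Lam P x \<longleftrightarrow> map (\<lambda>q. q x) Qs \<in> tab"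
    using E x by (auto simp: low_degree_expression_def)
  have members: "v (if i' = K - 1 then i0 else i') = P i' x" if "i' < K" "i' \<noteq> i0" for i'
    using that Lam by (auto simp: v_def replace_member_def)
  have "map (\<lambda>j. v (K - 1 + j)) [0..<length Qs] = map (\<lambda>q. q x) Qs"
    by (rule nth_equalityI) (auto simp: v_def replace_member_def)
  moreover have "{i'\<in>Lam - {i0}. v (if i' = K - 1 then i0 else i')} = {i'\<in>Lam - {i0}. P i' x}"
  proof (rule Collect_cong, rule conj_cong[OF refl])
    fix i' assume "i' \<in> Lam - {i0}"
    then show "v (if i' = K - 1 then i0 else i') = P i' x" using Lam by (intro members) auto
  qed
  moreover have "lin_comb Lam P x \<longleftrightarrow> odd (card {i'\<in>Lam - {i0}. P i' x}) \<noteq> P i0 x"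
    unfolding lin_comb_def by (rule odd_card_Collect_remove[OF finite_subset[OF Lam(1)] Lam(2)]) simp
  ultimately show ?thesis
    using members \<open>i < K\<close> lin unfolding v_def[symmetric] recover_members_def Let_def by auto
qed

lemma irregular_sequence_refinement_smaller_degrees:
  assumes fac: "\<forall>n. is_factor d K M (mF n) (F n)"
    and inf: "infinite {n. \<not> factor_regular r K (mF n) (F n)}"
  obtains L M' mG G where "\<forall>n. is_factor d L M' (mG n) (G n)" "dim_mset d M' < dim_mset d M"
    "refines L mG G K mF F"
proof -
  obtain g :: "nat \<Rightarrow> nat" and Lam i0 tab Qs l qdegs where "strict_mono g"
    and E: "\<And>n. low_degree_expression (mF (g n)) K (F (g n)) Lam i0 tab (Qs n)"
    and l: "\<And>n. poly_deg (mF (g n)) (F (g n) i0) = l"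
    and qdegs: "\<And>n. map (poly_deg (mF (g n))) (Qs n) = qdegs"
    by (rule irregular_sequence_uniform_subsequence[OF fac inf]) blast
  define D where "D = dim_mset d M - {#l#} + mset qdegs"
  define L where "L = K - 1 + length qdegs"
  define G where "G n = replace_member K i0 (F (g n)) (Qs n)" for n
  have length_Qs: "length (Qs n) = length qdegs" for n
    using qdegs[of n] by auto
  have "\<forall>n. is_factor d L (count D) (mF (g n)) (G n)"
    using replace_member_is_factor(1)[OF fac[rule_format] E]
    by (simp add: D_def L_def G_def l qdegs length_Qs)
  moreover have "dim_mset d (count D) < dim_mset d M"
    using replace_member_is_factor(2)[OF fac[rule_format] E, of 0]
    by (simp add: D_def l qdegs)
  moreover have "refines L (\<lambda>n. mF (g n)) G K mF F"
    unfolding refines_def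
  proof (intro exI[of _ g] exI[of _ "recover_members K Lam i0 tab (length qdegs)"] conjI allI impI)
    fix n x i assume "x \<subseteq> {..<mF (g n)}" "i < K"
    from recover_members_replace_member[OF E this] show "F (g n) i x =
      recover_members K Lam i0 tab (length qdegs) (\<lambda>j. if j < L then G n j x else False) i"
      by (simp add: L_def G_def length_Qs)
  qed (use \<open>strict_mono g\<close> in simp_all)
  ultimately show ?thesis by (rule that)
qed

theorem lemmaA3:
  fixes d K :: nat and M :: "nat \<Rightarrow> nat" and mF :: "nat \<Rightarrow> nat"
    and F :: "nat \<Rightarrow> nat \<Rightarrow> nat set \<Rightarrow> bool"
  assumes "d \<ge> 1"
    and "\<forall>n. is_factor d K M (mF n) (F n)"
  shows "\<exists>L M' mH H. (\<forall>n. is_factor d L M' (mH n) (H n)) \<and>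
           fully_regular L mH H \<and> refines L mH H K mF F"
  using assms(2)
proof (induction "dim_mset d M" arbitrary: K M mF F rule: less_induct)
  case less
  show ?case
  proof (cases "fully_regular K mF F")
    case True
    then show ?thesis using less.prems refines_refl by blast
  next
    case False
    then obtain r where irregular: "infinite {n. \<not> factor_regular r K (mF n) (F n)}"
      unfolding fully_regular_def seq_regular_def
      by (auto simp: infinite_nat_iff_unbounded_le)
    obtain L M' mG G where G: "\<forall>n. is_factor d L M' (mG n) (G n)"
      and smaller: "dim_mset d M' < dim_mset d M" and GF: "refines L mG G K mF F"
      by (rule irregular_sequence_refinement_smaller_degrees[OF less.prems irregular])
    from less.hyps[OF smaller G] obtain L' M'' mH H
      where "\<forall>n. is_factor d L' M'' (mH n) (H n)" "fully_regular L' mH H" "refines L' mH H L mG G"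
      by blast
    then show ?thesis using refines_trans[OF _ GF] by blast
  qed
qed

end
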